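(* Let $p\ge 0$ be an integer. For all complex $y$ and all complex $x\ne 1$, $$\sum_{n=0}^{\infty}\binom{n}{p} R_n(y)\,x^n=\frac{x^p e^{y}}{(1-x)^{p+1}}\left\{1-e^{-(1-x)y}\sum_{j=0}^{p}\frac{(1-x)^j y^j}{j!}\right\},$$ and for $x=1$, $$\sum_{n=0}^{\infty}\binom{n}{p} R_n(y)=\frac{e^{y}y^{p+1}}{(p+1)!}.$$ (Convention: $0^0=1$.)
   Context: For an integer $n\ge 0$ and complex $y$, $R_n(y)=e^y-1-\frac{y}{1!}-\frac{y^2}{2!}-\dots-\frac{y^n}{n!}=e^y-\sum_{k=0}^n\frac{y^k}{k!}$. $\binom{n}{p}=0$ for $n<p$. *)

theory Defs
  imports Complex_Main
begin

definition R :: "nat \<Rightarrow> complex \<Rightarrow> complex" where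
  "R n y = exp y - (\<Sum>k\<le>n. y ^ k / of_nat (fact k))"

end

theory Submission
  imports Defs "HOL-Analysis.Infinite_Sum"
begin

text \<open>
  Since \<open>R n y\<close> is the tail \<open>\<Sum>k>n. y ^ k / k!\<close> of the exponential series, the left-hand
  side is the absolutely convergent double series of \<open>c n * y ^ k / k!\<close> over \<open>n < k\<close>,
  with \<open>c n = (n choose p) * x ^ n\<close>. Summing it by columns instead gives
  \<open>\<Sum>k. y ^ k / k! * (\<Sum>n<k. c n)\<close>, and the inner sum has a closed form: for \<open>x = 1\<close> it
  is \<open>k choose (p + 1)\<close>, and for \<open>x \<noteq> 1\<close> it is \<open>x ^ p * (1 - B k) / (1 - x) ^ (p + 1)\<close>,
  where \<open>B k\<close> consists of the first \<open>p + 1\<close> terms of the binomial expansion of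
  \<open>(x + (1 - x)) ^ k = 1\<close>. Finally \<open>(k choose j) * x ^ (k - j) * y ^ k / k!\<close> sums over \<open>k\<close>
  to \<open>y ^ j / j! * exp (x * y)\<close>.
\<close>

definition binomial_partial_sum :: "'a :: comm_ring_1 \<Rightarrow> nat \<Rightarrow> nat \<Rightarrow> 'a" where
  "binomial_partial_sum x p k = (\<Sum>j\<le>p. of_nat (k choose j) * x ^ (k - j) * (1 - x) ^ j)"

lemma binomial_partial_sum_diff:
  "binomial_partial_sum x p k - binomial_partial_sum x p (Suc k)
     = of_nat (k choose p) * x ^ (k - p) * (1 - x) ^ Suc p"
proof (induction p)
  case 0
  then show ?case by (simp add: binomial_partial_sum_def algebra_simps)
next
  case (Suc p)
  have "binomial_partial_sum x (Suc p) k - binomial_partial_sum x (Suc p) (Suc k)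
      = (binomial_partial_sum x p k - binomial_partial_sum x p (Suc k))
        + of_nat (k choose Suc p) * x ^ (k - Suc p) * (1 - x) ^ Suc p
        - (of_nat (k choose p) + of_nat (k choose Suc p)) * x ^ (k - p) * (1 - x) ^ Suc p"
    by (simp add: binomial_partial_sum_def algebra_simps)
  moreover have "k - p = Suc (k - Suc p)" if "\<not> k \<le> p"
    using that by simp
  ultimately show ?case
    by (cases "k \<le> p") (simp_all add: Suc.IH binomial_eq_0 algebra_simps)
qed

lemma sum_choose_times_power:
  "(1 - x) ^ Suc p * (\<Sum>n<k. of_nat (n choose p) * x ^ n)
     = x ^ p * (1 - binomial_partial_sum x p k)"
proof (induction k)
  case 0
  then show ?case by (simp add: binomial_partial_sum_def sum.atMost_shift)
next
  case (Suc k)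
  have shift: "x ^ p * (of_nat (k choose p) * x ^ (k - p)) = of_nat (k choose p) * x ^ k"
  proof (cases "p \<le> k")
    case True
    then have "x ^ k = x ^ p * x ^ (k - p)"
      by (simp flip: power_add)
    then show ?thesis by simp
  qed (simp add: binomial_eq_0)
  have step: "binomial_partial_sum x p (Suc k)
      = binomial_partial_sum x p k - of_nat (k choose p) * x ^ (k - p) * (1 - x) ^ Suc p"
    using binomial_partial_sum_diff[of x p k] by (simp add: algebra_simps)
  have "x ^ p * (1 - binomial_partial_sum x p (Suc k))
      = x ^ p * (1 - binomial_partial_sum x p k)
        + x ^ p * (of_nat (k choose p) * x ^ (k - p)) * (1 - x) ^ Suc p"
    unfolding step by (simp add: algebra_simps)
  also have "\<dots> = (1 - x) ^ Suc p * (\<Sum>n<Suc k. of_nat (n choose p) * x ^ n)"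
    unfolding shift Suc.IH[symmetric] by (simp add: algebra_simps)
  finally show ?case by simp
qed

lemma sum_choose_lessThan: "(\<Sum>n<k. n choose p) = k choose Suc p"
  by (induction k) auto

lemma norm_choose_times_power_le:
  "norm (of_nat (n choose p) * x ^ n :: 'a :: real_normed_field) \<le> (2 * norm x) ^ n"
proof -
  have "real (n choose p) \<le> 2 ^ n"
    using binomial_le_pow2[of n p] by (metis of_nat_le_iff of_nat_numeral of_nat_power)
  then show ?thesis
    by (simp add: norm_mult norm_power power_mult_distrib mult_right_mono)
qed

lemma sums_of_has_sum_rows:
  fixes F :: "nat \<Rightarrow> nat \<Rightarrow> complex"
  assumes F: "((\<lambda>(n, k). F n k) has_sum T) UNIV"
    and rows: "\<And>n. F n sums r n"
  shows "r sums T"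
proof -
  have F': "((\<lambda>p. F (fst p) (snd p)) has_sum T) (UNIV \<times> UNIV)"
    using F by (simp add: case_prod_unfold)
  have "(r has_sum T) UNIV"
  proof (rule has_sum_Sigma'[OF F'])
    fix n
    have "F n summable_on UNIV"
      using summable_on_SigmaD1[of F UNIV "\<lambda>_. UNIV"] F by (auto dest: has_sum_imp_summable)
    then have "(F n has_sum infsum (F n) UNIV) UNIV" by (rule has_sum_infsum)
    moreover from this have "infsum (F n) UNIV = r n"
      using rows[of n] has_sum_imp_sums sums_unique2 by blast
    ultimately show "((\<lambda>k. F (fst (n, k)) (snd (n, k))) has_sum r n) UNIV" by simp
  qed
  then show ?thesis by (rule has_sum_imp_sums)
qed

lemma sums_swap_double_series:
  fixes F :: "nat \<Rightarrow> nat \<Rightarrow> complex"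
  assumes abs: "(\<lambda>(n, k). norm (F n k)) summable_on UNIV"
    and rows: "\<And>n. F n sums r n"
    and cols: "\<And>k. (\<lambda>n. F n k) sums c k"
    and "c sums S"
  shows "r sums S"
proof -
  have "(\<lambda>(n, k). F n k) summable_on UNIV"
    using abs_summable_summable[of "\<lambda>(n, k). F n k"] abs by (simp add: case_prod_unfold)
  then obtain T where T: "((\<lambda>(n, k). F n k) has_sum T) UNIV"
    by (auto simp: summable_on_def)
  then have "((\<lambda>(k, n). F n k) has_sum T) UNIV"
    by (subst (asm) UNIV_Times_UNIV[symmetric], subst (asm) has_sum_swap) simp
  then have "c sums T"
    by (rule sums_of_has_sum_rows) (rule cols)
  with \<open>c sums S\<close> have "S = T" by (rule sums_unique2)
  with sums_of_has_sum_rows[OF T rows] show ?thesis by simp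
qed

lemma exp_sums: "(\<lambda>k. z ^ k / fact k) sums exp (z :: 'a :: {banach, real_normed_field})"
  using exp_converges[of z] by (simp add: scaleR_conv_of_real divide_inverse mult.commute)

lemma summable_on_geometric_times_exp_series:
  assumes "0 \<le> z"
  shows "(\<lambda>(n, k). (1/2) ^ n * (z ^ k / fact k :: real)) summable_on UNIV"
proof -
  have "(\<lambda>(n, k). (1/2) ^ n * (z ^ k / fact k :: real)) summable_on UNIV \<times> UNIV"
  proof (rule summable_on_SigmaI)
    fix n :: nat
    have "(\<lambda>k. (1/2) ^ n * (z ^ k / fact k :: real)) sums ((1/2) ^ n * exp z)"
      by (rule sums_mult[OF exp_sums])
    then show "((\<lambda>k. (\<lambda>(n, k). (1/2) ^ n * (z ^ k / fact k :: real)) (n, k))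
                 has_sum ((1/2) ^ n * exp z)) UNIV"
      unfolding prod.case by (rule sums_nonneg_imp_has_sum) (use assms in simp)
  next
    have "((\<lambda>n. (1/2::real) ^ n) has_sum 2) UNIV"
      by (rule sums_nonneg_imp_has_sum) (use geometric_sums[of "1/2::real"] in auto)
    then show "(\<lambda>n. (1/2::real) ^ n * exp z) summable_on UNIV"
      by (auto simp: summable_on_def dest: has_sum_cmult_left)
  qed (use assms in auto)
  then show ?thesis by simp
qed

lemma sums_exp_remainder_series:
  fixes c :: "nat \<Rightarrow> complex" and B :: real and y :: complex
  assumes bound: "\<And>n. norm (c n) \<le> B ^ n"
    and cols: "(\<lambda>k. y ^ k / fact k * (\<Sum>n<k. c n)) sums S"
  shows "(\<lambda>n. c n * R n y) sums S"
proof (rule sums_swap_double_series[OF _ _ _ cols])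
  define F where "F n k = (if n < k then c n * (y ^ k / fact k) else 0)" for n k
  define M where "M = max 1 \<bar>B\<bar>"
  have M: "1 \<le> M" "\<bar>B\<bar> \<le> M" by (simp_all add: M_def)
  \<comment> \<open>Majorant \<open>(1/2)^n * (2 M |y|)^k / k!\<close>: for \<open>n < k\<close> we have \<open>M^n \<le> (1/2)^n * (2 M)^k\<close>.\<close>
  have "norm (F n k) \<le> (1/2) ^ n * ((2 * M * norm y) ^ k / fact k)" for n k
  proof (cases "n < k")
    case True
    have "norm (c n) \<le> M ^ n"
      using bound[of n] abs_ge_self[of "B ^ n"] power_mono[OF M(2), of n]
      by (simp only: power_abs) linarith
    also have "\<dots> = (1/2) ^ n * (2 * M) ^ n" by (simp add: power_mult_distrib power_divide)
    also have "\<dots> \<le> (1/2) ^ n * (2 * M) ^ k"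
      using True M(1) by (intro mult_left_mono power_increasing) auto
    finally have "norm (c n) * (norm y ^ k / fact k) \<le> (1/2) ^ n * (2 * M) ^ k * (norm y ^ k / fact k)"
      by (rule mult_right_mono) simp
    then show ?thesis
      using True by (simp add: F_def norm_mult norm_divide norm_power power_mult_distrib mult_ac)
  qed (use M(1) in \<open>simp add: F_def\<close>)
  then have "(\<lambda>nk. norm ((\<lambda>(n, k). F n k) nk)) summable_on UNIV"
    using M(1) summable_on_geometric_times_exp_series[of "2 * M * norm y"]
    by (intro abs_summable_on_comparison_test') auto
  then show "(\<lambda>(n, k). norm (F n k)) summable_on UNIV"
    by (simp add: case_prod_unfold)
  show "F n sums (c n * R n y)" for n
  proof -
    have "(\<lambda>k. c n * (y ^ k / fact k - (if k \<in> {..n} then y ^ k / fact k else 0)))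
            sums (c n * (exp y - (\<Sum>k\<in>{..n}. y ^ k / fact k)))"
      by (intro sums_mult sums_diff exp_sums sums_If_finite_set) simp
    moreover have "(\<lambda>k. c n * (y ^ k / fact k - (if k \<in> {..n} then y ^ k / fact k else 0))) = F n"
      by (auto simp: F_def fun_eq_iff)
    ultimately show ?thesis
      by (simp add: R_def)
  qed
  show "(\<lambda>n. F n k) sums (y ^ k / fact k * (\<Sum>n<k. c n))" for k
    using sums_If_finite_set[of "{..<k}" "\<lambda>n. c n * (y ^ k / fact k)"]
    by (simp add: F_def sum_distrib_left sum_divide_distrib mult_ac)
qed

lemma sums_exp_series_times_choose:
  fixes x y :: "'a :: {banach, real_normed_field}"
  shows "(\<lambda>k. y ^ k / fact k * (of_nat (k choose j) * x ^ (k - j)))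
           sums (y ^ j / fact j * exp (x * y))"
proof -
  have "y ^ (i + j) / fact (i + j) * (of_nat ((i + j) choose j) * x ^ (i + j - j))
        = y ^ j / fact j * ((x * y) ^ i / fact i)" for i
  proof -
    have "of_nat ((i + j) choose j) = (fact (i + j) / (fact j * fact i) :: 'a)"
      using binomial_fact[of j "i + j"] by simp
    then show ?thesis by (simp add: power_add power_mult_distrib field_simps)
  qed
  moreover have "(\<lambda>i. y ^ j / fact j * ((x * y) ^ i / fact i)) sums (y ^ j / fact j * exp (x * y))"
    by (rule sums_mult[OF exp_sums])
  ultimately have "(\<lambda>i. y ^ (i + j) / fact (i + j) * (of_nat ((i + j) choose j) * x ^ (i + j - j)))
               sums (y ^ j / fact j * exp (x * y))"
    by simp
  then show ?thesis
    by (subst sums_zero_iff_shift[symmetric, of j]) auto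
qed

lemma sums_exp_series_times_choose_power_sum:
  fixes x y :: "'a :: {banach, real_normed_field}"
  assumes "x \<noteq> 1"
  shows "(\<lambda>k. y ^ k / fact k * (\<Sum>n<k. of_nat (n choose p) * x ^ n)) sums
           (x ^ p * exp y / (1 - x) ^ (p + 1) *
             (1 - exp (- ((1 - x) * y)) * (\<Sum>j\<le>p. (1 - x) ^ j * y ^ j / fact j)))"
proof -
  define q where "q = 1 - x"
  have q: "q \<noteq> 0" using assms by (simp add: q_def)
  have column: "y ^ k / fact k * (\<Sum>n<k. of_nat (n choose p) * x ^ n)
      = x ^ p / q ^ Suc p * (y ^ k / fact k
          - (\<Sum>j\<le>p. q ^ j * (y ^ k / fact k * (of_nat (k choose j) * x ^ (k - j)))))" for k
  proof -
    have closed_form: "(\<Sum>n<k. of_nat (n choose p) * x ^ n)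
        = x ^ p * (1 - binomial_partial_sum x p k) / q ^ Suc p"
      using sum_choose_times_power[of x p k] q by (simp add: q_def nonzero_eq_divide_eq mult.commute)
    have expand: "y ^ k / fact k * binomial_partial_sum x p k
        = (\<Sum>j\<le>p. q ^ j * (y ^ k / fact k * (of_nat (k choose j) * x ^ (k - j))))"
      by (simp add: binomial_partial_sum_def q_def sum_distrib_left mult_ac)
    show ?thesis
      unfolding closed_form expand[symmetric] using q by (simp add: field_simps)
  qed
  have column_sums: "(\<lambda>k. x ^ p / q ^ Suc p * (y ^ k / fact k
          - (\<Sum>j\<le>p. q ^ j * (y ^ k / fact k * (of_nat (k choose j) * x ^ (k - j))))))
        sums (x ^ p / q ^ Suc p * (exp y - (\<Sum>j\<le>p. q ^ j * (y ^ j / fact j * exp (x * y)))))"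
    by (intro sums_mult sums_diff exp_sums sums_sum sums_exp_series_times_choose)
  have limit: "x ^ p * exp y / q ^ (p + 1) * (1 - exp (- (q * y)) * (\<Sum>j\<le>p. q ^ j * y ^ j / fact j))
      = x ^ p / q ^ Suc p * (exp y - (\<Sum>j\<le>p. q ^ j * (y ^ j / fact j * exp (x * y))))"
  proof -
    have "exp y * exp (- (q * y)) = exp (x * y)"
      by (simp add: q_def algebra_simps flip: exp_add)
    then have "exp y * exp (- (q * y)) * (\<Sum>j\<le>p. q ^ j * y ^ j / fact j)
        = (\<Sum>j\<le>p. q ^ j * (y ^ j / fact j * exp (x * y)))"
      by (simp add: sum_distrib_left sum_distrib_right mult_ac)
    then show ?thesis
      by (simp add: algebra_simps)
  qed
  show ?thesis
    unfolding q_def[symmetric] column limit by (rule column_sums)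
qed

lemma sums_exp_series_times_choose_sum:
  fixes y :: "'a :: {banach, real_normed_field}"
  shows "(\<lambda>k. y ^ k / fact k * (\<Sum>n<k. of_nat (n choose p)))
           sums (exp y * y ^ (p + 1) / fact (p + 1))"
  using sums_exp_series_times_choose[of y "Suc p" 1]
  by (simp flip: of_nat_sum add: sum_choose_lessThan mult_ac)

theorem mainTheorem3:
  fixes p :: nat and y :: complex
  shows "(\<forall>x::complex. x \<noteq> 1 \<longrightarrow>
            (\<lambda>n. of_nat (n choose p) * R n y * x ^ n) sums
              (x ^ p * exp y / (1 - x) ^ (p + 1) *
                (1 - exp (- ((1 - x) * y)) *
                   (\<Sum>j\<le>p. (1 - x) ^ j * y ^ j / of_nat (fact j)))))
         \<and> (\<lambda>n. of_nat (n choose p) * R n y) sums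
              (exp y * y ^ (p + 1) / of_nat (fact (p + 1)))"
proof (intro conjI allI impI)
  fix x :: complex
  assume "x \<noteq> 1"
  from sums_exp_remainder_series[OF norm_choose_times_power_le
      sums_exp_series_times_choose_power_sum[OF this]]
  show "(\<lambda>n. of_nat (n choose p) * R n y * x ^ n) sums
          (x ^ p * exp y / (1 - x) ^ (p + 1) *
            (1 - exp (- ((1 - x) * y)) * (\<Sum>j\<le>p. (1 - x) ^ j * y ^ j / of_nat (fact j))))"
    by (simp add: mult_ac)
next
  have "norm (of_nat (n choose p) :: complex) \<le> 2 ^ n" for n
    using norm_choose_times_power_le[of n p "1 :: complex"] by simp
  from sums_exp_remainder_series[OF this sums_exp_series_times_choose_sum]
  show "(\<lambda>n. of_nat (n choose p) * R n y) sums (exp y * y ^ (p + 1) / of_nat (fact (p + 1)))"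
    by (simp only: of_nat_fact)
qed

end
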